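(* Let $G$ be a non-trivial graph with $m$ edges. Then $$ H(\mathcal{L}(G)) \leq \frac{m}{2} , $$ with equality if and only if each connected component of $G$ is regular or biregular.
   Context: All graphs are finite and simple. A graph is non-trivial if each of its connected components has at least two edges. $d_u$ is the degree of $u$. The harmonic index is $H(G)=\sum_{uv\in E(G)}\frac{2}{d_u+d_v}$. The line graph $\mathcal{L}(G)$ has vertex set $E(G)$, two vertices being adjacent iff the corresponding edges share an end vertex in $G$. A graph is biregular if it is bipartite and all vertices in the same part of the bipartition have the same degree. *)

theory Defs
  imports Main "HOL-Library.Disjoint_Sets" Complex_Main
begin

definition simple_graph :: "'a set \<Rightarrow> 'a set set \<Rightarrow> bool" where
  "simple_graph V E \<longleftrightarrow> finite V \<and> (\<forall>e\<in>E. \<exists>u v. e = {u, v} \<and> u \<noteq> v \<and> u \<in> V \<and> v \<in> V)"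

definition degree :: "'a set set \<Rightarrow> 'a \<Rightarrow> nat" where
  "degree E u = card {e \<in> E. u \<in> e}"

definition adjacent :: "'a set set \<Rightarrow> 'a \<Rightarrow> 'a \<Rightarrow> bool" where
  "adjacent E u v \<longleftrightarrow> u \<noteq> v \<and> {u, v} \<in> E"

definition component :: "'a set set \<Rightarrow> 'a \<Rightarrow> 'a set" where
  "component E v = {w. (adjacent E)\<^sup>*\<^sup>* v w}"

definition components :: "'a set \<Rightarrow> 'a set set \<Rightarrow> 'a set set" where
  "components V E = component E ` V"

definition comp_edges :: "'a set set \<Rightarrow> 'a set \<Rightarrow> 'a set set" where
  "comp_edges E C = {e \<in> E. e \<subseteq> C}"

definition nontrivial :: "'a set \<Rightarrow> 'a set set \<Rightarrow> bool" where
  "nontrivial V E \<longleftrightarrow> (\<forall>C \<in> components V E. card (comp_edges E C) \<ge> 2)"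

definition harmonic_index :: "'a set set \<Rightarrow> real" where
  "harmonic_index E = (\<Sum>e\<in>E. 2 / real (\<Sum>u\<in>e. degree E u))"

text \<open>Edge set of the line graph (its vertex set is E).\<close>
definition line_graph_edges :: "'a set set \<Rightarrow> 'a set set set" where
  "line_graph_edges E = {{e, f} | e f. e \<in> E \<and> f \<in> E \<and> e \<noteq> f \<and> e \<inter> f \<noteq> {}}"

definition regular_on :: "'a set set \<Rightarrow> 'a set \<Rightarrow> bool" where
  "regular_on E C \<longleftrightarrow> (\<exists>k. \<forall>v\<in>C. degree E v = k)"

definition biregular_on :: "'a set set \<Rightarrow> 'a set \<Rightarrow> bool" where
  "biregular_on E C \<longleftrightarrow> (\<exists>A B k l. A \<union> B = C \<and> A \<inter> B = {} \<and>
     (\<forall>e \<in> comp_edges E C. card (e \<inter> A) = 1 \<and> card (e \<inter> B) = 1) \<and>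
     (\<forall>v\<in>A. degree E v = k) \<and> (\<forall>v\<in>B. degree E v = l))"

end

theory Submission
  imports Defs
begin

text \<open>For an edge \<open>uv\<close> of a graph the harmonic-arithmetic mean inequality gives
  \<open>2 / (d\<^sub>u + d\<^sub>v) \<le> 1 / (2 d\<^sub>u) + 1 / (2 d\<^sub>v)\<close>, with equality iff \<open>d\<^sub>u = d\<^sub>v\<close>. Summing
  over the edges, each non-isolated vertex contributes \<open>d\<^sub>u \<cdot> 1 / (2 d\<^sub>u) = 1/2\<close>, so the
  harmonic index of a graph is at most half its number of non-isolated vertices, with
  equality iff the two ends of every edge have the same degree. In a non-trivial graph every
  edge meets another edge, so the line graph has no isolated vertices and \<open>m\<close> vertices. An
  edge \<open>uv\<close> has degree \<open>d\<^sub>u + d\<^sub>v - 2\<close> in the line graph, hence the equality condition for the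
  line graph says that any two neighbours of a vertex have the same degree. Propagating this
  along paths splits every component into vertices of degree \<open>a\<close> with all neighbours of
  degree \<open>b\<close> and vice versa: the component is regular (\<open>a = b\<close>) or biregular.\<close>

lemma simple_graph_edgeE:
  assumes "simple_graph V E" and "e \<in> E"
  obtains u v where "e = {u, v}" and "u \<noteq> v" and "u \<in> V" and "v \<in> V"
  using assms unfolding simple_graph_def by blast

lemma simple_graph_edge_through:
  assumes "simple_graph V E" and "e \<in> E" and "x \<in> e"
  obtains y where "e = {x, y}" and "x \<noteq> y"
  using assms by (elim simple_graph_edgeE) (auto simp: insert_commute)

lemma simple_graph_edge_eq:
  assumes "simple_graph V E" and "e \<in> E" and "u \<in> e" and "v \<in> e" and "u \<noteq> v"
  shows "e = {u, v}"
  using assms by (elim simple_graph_edgeE) auto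

lemma simple_graph_doubleton_edge:
  assumes "simple_graph V E" and "{u, v} \<in> E"
  shows "u \<noteq> v" and "u \<in> V" and "v \<in> V"
  using simple_graph_edgeE[OF assms] by (auto simp: doubleton_eq_iff)

lemma simple_graph_finite_edges:
  assumes "simple_graph V E"
  shows "finite E"
proof (rule finite_subset)
  show "E \<subseteq> Pow V"
    using assms by (auto elim: simple_graph_edgeE)
  show "finite (Pow V)"
    using assms by (simp add: simple_graph_def)
qed

lemma degree_pos:
  assumes "simple_graph V E" and "e \<in> E" and "u \<in> e"
  shows "degree E u > 0"
  using assms simple_graph_finite_edges[OF assms(1)]
  unfolding degree_def by (auto simp: card_gt_0_iff)

subsection \<open>The harmonic index of a graph\<close>

lemma sum_edges_sum_ends:
  fixes g :: "'a \<Rightarrow> 'b :: semiring_1"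
  assumes "finite E" and "\<forall>e\<in>E. finite e"
  shows "(\<Sum>e\<in>E. \<Sum>u\<in>e. g u) = (\<Sum>u\<in>\<Union>E. of_nat (degree E u) * g u)"
proof -
  have "(\<Sum>e\<in>E. \<Sum>u\<in>e. g u) = (\<Sum>e\<in>E. \<Sum>u\<in>{u \<in> \<Union>E. u \<in> e}. g u)"
    by (rule sum.cong) (auto intro: arg_cong[where f = "sum g"])
  also have "\<dots> = (\<Sum>u\<in>\<Union>E. \<Sum>e\<in>{e \<in> E. u \<in> e}. g u)"
    using assms by (intro sum.swap_restrict) auto
  also have "\<dots> = (\<Sum>u\<in>\<Union>E. of_nat (degree E u) * g u)"
    by (simp add: degree_def)
  finally show ?thesis .
qed

lemma arith_harm_mean:
  fixes a b :: real
  assumes "a > 0" and "b > 0"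
  shows "2 / (a + b) \<le> 1 / (2 * a) + 1 / (2 * b)"
    and "2 / (a + b) = 1 / (2 * a) + 1 / (2 * b) \<longleftrightarrow> a = b"
proof -
  have gap: "1 / (2 * a) + 1 / (2 * b) - 2 / (a + b) = (a - b)\<^sup>2 / (2 * a * b * (a + b))"
    using assms by (simp add: field_simps power2_eq_square)
  show "2 / (a + b) \<le> 1 / (2 * a) + 1 / (2 * b)"
    using gap assms by (smt (verit) divide_nonneg_pos mult_pos_pos zero_le_power2)
  show "2 / (a + b) = 1 / (2 * a) + 1 / (2 * b) \<longleftrightarrow> a = b"
    using gap assms by auto
qed

lemma harmonic_index_edge_term_le:
  assumes "simple_graph V E" and "e \<in> E"
  shows "2 / real (\<Sum>u\<in>e. degree E u) \<le> (\<Sum>u\<in>e. 1 / (2 * real (degree E u)))"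
    and "2 / real (\<Sum>u\<in>e. degree E u) = (\<Sum>u\<in>e. 1 / (2 * real (degree E u)))
      \<longleftrightarrow> (\<forall>u\<in>e. \<forall>v\<in>e. degree E u = degree E v)"
proof -
  obtain u v where e: "e = {u, v}" "u \<noteq> v"
    using assms by (elim simple_graph_edgeE)
  have pos: "real (degree E u) > 0" "real (degree E v) > 0"
    using degree_pos[OF assms] e by auto
  have sums: "real (\<Sum>u\<in>e. degree E u) = real (degree E u) + real (degree E v)"
    "(\<Sum>u\<in>e. 1 / (2 * real (degree E u))) = 1 / (2 * real (degree E u)) + 1 / (2 * real (degree E v))"
    using e by simp_all
  have "(\<forall>x\<in>e. \<forall>y\<in>e. degree E x = degree E y) \<longleftrightarrow> real (degree E u) = real (degree E v)"
    using e by auto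
  with arith_harm_mean[OF pos] sums show
    "2 / real (\<Sum>u\<in>e. degree E u) \<le> (\<Sum>u\<in>e. 1 / (2 * real (degree E u)))"
    "2 / real (\<Sum>u\<in>e. degree E u) = (\<Sum>u\<in>e. 1 / (2 * real (degree E u)))
      \<longleftrightarrow> (\<forall>u\<in>e. \<forall>v\<in>e. degree E u = degree E v)"
    by simp_all
qed

lemma sum_edges_half_inverse_degrees:
  assumes "simple_graph V E"
  shows "(\<Sum>e\<in>E. \<Sum>u\<in>e. 1 / (2 * real (degree E u))) = real (card (\<Union>E)) / 2"
proof -
  have "finite E" "\<forall>e\<in>E. finite e"
    using assms simple_graph_finite_edges by (auto elim: simple_graph_edgeE)
  then have "(\<Sum>e\<in>E. \<Sum>u\<in>e. 1 / (2 * real (degree E u)))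
      = (\<Sum>u\<in>\<Union>E. real (degree E u) * (1 / (2 * real (degree E u))))"
    by (rule sum_edges_sum_ends)
  also have "\<dots> = (\<Sum>u\<in>\<Union>E. 1 / 2)"
    using degree_pos[OF assms] by (intro sum.cong) auto
  finally show ?thesis
    by simp
qed

theorem harmonic_index_le_half_card:
  assumes "simple_graph V E"
  shows "harmonic_index E \<le> real (card (\<Union>E)) / 2"
  unfolding harmonic_index_def sum_edges_half_inverse_degrees[OF assms, symmetric]
  using harmonic_index_edge_term_le(1)[OF assms] by (rule sum_mono)

theorem harmonic_index_eq_half_card_iff:
  assumes "simple_graph V E"
  shows "harmonic_index E = real (card (\<Union>E)) / 2 \<longleftrightarrow>
    (\<forall>e\<in>E. \<forall>u\<in>e. \<forall>v\<in>e. degree E u = degree E v)"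
  unfolding harmonic_index_def sum_edges_half_inverse_degrees[OF assms, symmetric]
proof
  assume "(\<Sum>e\<in>E. 2 / real (\<Sum>u\<in>e. degree E u)) = (\<Sum>e\<in>E. \<Sum>u\<in>e. 1 / (2 * real (degree E u)))"
  then have "2 / real (\<Sum>u\<in>e. degree E u) = (\<Sum>u\<in>e. 1 / (2 * real (degree E u)))" if "e \<in> E" for e
    by (rule sum_mono_inv[where f = "\<lambda>e. 2 / real (\<Sum>u\<in>e. degree E u)"
          and g = "\<lambda>e. \<Sum>u\<in>e. 1 / (2 * real (degree E u))", OF _ harmonic_index_edge_term_le(1)[OF assms]])
      (use that simple_graph_finite_edges[OF assms] in auto)
  then show "\<forall>e\<in>E. \<forall>u\<in>e. \<forall>v\<in>e. degree E u = degree E v"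
    using harmonic_index_edge_term_le(2)[OF assms] by blast
next
  assume "\<forall>e\<in>E. \<forall>u\<in>e. \<forall>v\<in>e. degree E u = degree E v"
  then show "(\<Sum>e\<in>E. 2 / real (\<Sum>u\<in>e. degree E u)) = (\<Sum>e\<in>E. \<Sum>u\<in>e. 1 / (2 * real (degree E u)))"
    using harmonic_index_edge_term_le(2)[OF assms] by (intro sum.cong) blast+
qed

subsection \<open>The line graph\<close>

lemma line_graph_edgesI:
  assumes "e \<in> E" and "f \<in> E" and "e \<noteq> f" and "e \<inter> f \<noteq> {}"
  shows "{e, f} \<in> line_graph_edges E"
  using assms unfolding line_graph_edges_def by blast

lemma line_graph_edgesE:
  assumes "F \<in> line_graph_edges E"
  obtains e f where "F = {e, f}" and "e \<in> E" and "f \<in> E" and "e \<noteq> f" and "e \<inter> f \<noteq> {}"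
  using assms unfolding line_graph_edges_def by blast

lemma simple_graph_line_graph:
  assumes "simple_graph V E"
  shows "simple_graph E (line_graph_edges E)"
  using simple_graph_finite_edges[OF assms]
  unfolding simple_graph_def line_graph_edges_def by blast

lemma degree_line_graph:
  assumes G: "simple_graph V E" and uv: "{u, v} \<in> E" and "u \<noteq> v"
  shows "degree (line_graph_edges E) {u, v} + 2 = degree E u + degree E v"
proof -
  define e where "e = {u, v}"
  define S where "S = {f \<in> E. f \<noteq> e \<and> e \<inter> f \<noteq> {}}"
  define Su where "Su = {f \<in> E. u \<in> f}"
  define Sv where "Sv = {f \<in> E. v \<in> f}"
  have "e \<in> E"
    using uv by (simp add: e_def)
  have fin: "finite Su" "finite Sv" "finite S"
    using simple_graph_finite_edges[OF G] unfolding Su_def Sv_def S_def by simp_all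
  have "{F \<in> line_graph_edges E. e \<in> F} = (\<lambda>f. {e, f}) ` S"
  proof
    show "(\<lambda>f. {e, f}) ` S \<subseteq> {F \<in> line_graph_edges E. e \<in> F}"
      using \<open>e \<in> E\<close> unfolding line_graph_edges_def S_def by blast
    show "{F \<in> line_graph_edges E. e \<in> F} \<subseteq> (\<lambda>f. {e, f}) ` S"
      unfolding line_graph_edges_def S_def by (auto simp: Int_commute)
  qed
  moreover have "inj_on (\<lambda>f. {e, f}) S"
    unfolding S_def inj_on_def doubleton_eq_iff by blast
  ultimately have "degree (line_graph_edges E) e = card S"
    unfolding degree_def by (simp add: card_image)
  moreover have "Su \<union> Sv = insert e S"
    using \<open>e \<in> E\<close> unfolding S_def Su_def Sv_def e_def by blast
  moreover have "Su \<inter> Sv = {e}"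
    using \<open>e \<in> E\<close> simple_graph_edge_eq[OF G _ _ _ \<open>u \<noteq> v\<close>]
    unfolding Su_def Sv_def e_def by blast
  moreover have "e \<notin> S"
    unfolding S_def by simp
  ultimately show ?thesis
    using card_Un_Int[OF fin(1,2)] fin(3)
    unfolding degree_def Su_def[symmetric] Sv_def[symmetric] e_def[symmetric] by simp
qed

lemma component_subset_isolated_edge:
  assumes "{u, v} \<in> E" and isolated: "\<forall>f\<in>E. f \<noteq> {u, v} \<longrightarrow> f \<inter> {u, v} = {}"
  shows "component E u \<subseteq> {u, v}"
proof
  fix y
  assume "y \<in> component E u"
  then have "(adjacent E)\<^sup>*\<^sup>* u y"
    by (simp add: component_def)
  then show "y \<in> {u, v}"
  proof (induction rule: rtranclp_induct)
    case (step y z)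
    have "{y, z} \<in> E" "{y, z} \<inter> {u, v} \<noteq> {}"
      using step unfolding adjacent_def by auto
    then have "{y, z} = {u, v}"
      using isolated by metis
    then show ?case
      by blast
  qed simp
qed

lemma nontrivial_edge_meets_edge:
  assumes G: "simple_graph V E" and "nontrivial V E" and "e \<in> E"
  obtains f where "f \<in> E" and "f \<noteq> e" and "e \<inter> f \<noteq> {}"
proof (rule ccontr)
  assume "\<not> thesis"
  then have isolated: "\<forall>f\<in>E. f \<noteq> e \<longrightarrow> f \<inter> e = {}"
    using that by blast
  obtain u v where e: "e = {u, v}" "u \<in> V"
    using G \<open>e \<in> E\<close> by (elim simple_graph_edgeE)
  have "card (comp_edges E (component E u)) \<ge> 2"
    using \<open>nontrivial V E\<close> e unfolding nontrivial_def components_def by blast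
  then obtain f where f: "f \<in> comp_edges E (component E u)" "f \<noteq> e"
    using card_mono[of "{e}" "comp_edges E (component E u)"] by force
  have "f \<subseteq> {u, v}"
    using f(1) component_subset_isolated_edge[of u v E] isolated \<open>e \<in> E\<close> e
    unfolding comp_edges_def by blast
  moreover obtain a b where "f = {a, b}" "a \<noteq> b"
    using G f(1) unfolding comp_edges_def by (blast elim: simple_graph_edgeE)
  ultimately have "f = e"
    using e by auto
  with f(2) show False ..
qed

lemma Union_line_graph_edges:
  assumes "simple_graph V E" and "nontrivial V E"
  shows "\<Union>(line_graph_edges E) = E"
proof
  show "\<Union>(line_graph_edges E) \<subseteq> E"
    by (auto elim: line_graph_edgesE)
  show "E \<subseteq> \<Union>(line_graph_edges E)"
  proof
    fix e
    assume "e \<in> E"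
    then obtain f where "f \<in> E" "f \<noteq> e" "e \<inter> f \<noteq> {}"
      using assms by (elim nontrivial_edge_meets_edge)
    with \<open>e \<in> E\<close> show "e \<in> \<Union>(line_graph_edges E)"
      using line_graph_edgesI by blast
  qed
qed

subsection \<open>Graphs in which all neighbours of a vertex have the same degree\<close>

definition neighbours_equal_degree :: "'a set set \<Rightarrow> bool" where
  "neighbours_equal_degree E \<longleftrightarrow>
    (\<forall>w u v. {w, u} \<in> E \<longrightarrow> {w, v} \<in> E \<longrightarrow> degree E u = degree E v)"

lemma line_graph_ends_equal_degree_iff:
  assumes G: "simple_graph V E"
  shows "(\<forall>F\<in>line_graph_edges E. \<forall>e\<in>F. \<forall>f\<in>F.
      degree (line_graph_edges E) e = degree (line_graph_edges E) f)
    \<longleftrightarrow> neighbours_equal_degree E"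
    (is "(\<forall>F\<in>?L. \<forall>e\<in>F. \<forall>f\<in>F. ?d e = ?d f) \<longleftrightarrow> _")
proof
  assume L: "\<forall>F\<in>?L. \<forall>e\<in>F. \<forall>f\<in>F. ?d e = ?d f"
  show "neighbours_equal_degree E"
    unfolding neighbours_equal_degree_def
  proof (intro allI impI)
    fix w u v
    assume wu: "{w, u} \<in> E" and wv: "{w, v} \<in> E"
    have "w \<noteq> u" "w \<noteq> v"
      using simple_graph_doubleton_edge[OF G] wu wv by blast+
    show "degree E u = degree E v"
    proof (cases "u = v")
      case False
      then have "{w, u} \<noteq> {w, v}"
        using \<open>w \<noteq> u\<close> by (simp add: doubleton_eq_iff)
      then have "{{w, u}, {w, v}} \<in> ?L"
        using line_graph_edgesI[OF wu wv] by blast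
      then have "?d {w, u} = ?d {w, v}"
        by (rule L[rule_format]) simp_all
      then show ?thesis
        using degree_line_graph[OF G wu \<open>w \<noteq> u\<close>] degree_line_graph[OF G wv \<open>w \<noteq> v\<close>] by simp
    qed simp
  qed
next
  assume N: "neighbours_equal_degree E"
  have common_end: "?d e = ?d f"
    if edges: "e \<in> E" "f \<in> E" and ends: "x \<in> e" "x \<in> f" for e f x
  proof -
    obtain u where u: "e = {x, u}" "x \<noteq> u"
      using G edges(1) ends(1) by (rule simple_graph_edge_through)
    obtain v where v: "f = {x, v}" "x \<noteq> v"
      using G edges(2) ends(2) by (rule simple_graph_edge_through)
    have "{x, u} \<in> E" "{x, v} \<in> E"
      using edges u(1) v(1) by simp_all
    then have "degree E u = degree E v"
      by (rule N[unfolded neighbours_equal_degree_def, rule_format])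
    moreover have "?d {x, u} + 2 = degree E x + degree E u"
      using degree_line_graph[OF G \<open>{x, u} \<in> E\<close> u(2)] .
    moreover have "?d {x, v} + 2 = degree E x + degree E v"
      using degree_line_graph[OF G \<open>{x, v} \<in> E\<close> v(2)] .
    ultimately show ?thesis
      using u(1) v(1) by simp
  qed
  show "\<forall>F\<in>?L. \<forall>e\<in>F. \<forall>f\<in>F. ?d e = ?d f"
  proof (intro ballI)
    fix F e f
    assume "F \<in> ?L" "e \<in> F" "f \<in> F"
    from \<open>F \<in> ?L\<close> obtain e' f' where F: "F = {e', f'}" and "e' \<in> E" "f' \<in> E" "e' \<inter> f' \<noteq> {}"
      by (rule line_graph_edgesE)
    from \<open>e' \<inter> f' \<noteq> {}\<close> obtain x where "x \<in> e'" "x \<in> f'"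
      by blast
    with \<open>e' \<in> E\<close> \<open>f' \<in> E\<close> have "?d e' = ?d f'"
      by (rule common_end)
    with F \<open>e \<in> F\<close> \<open>f \<in> F\<close> show "?d e = ?d f"
      by auto
  qed
qed

lemma card_doubleton_Int_eq_1_iff:
  assumes "x \<noteq> y"
  shows "card ({x, y} \<inter> A) = 1 \<longleftrightarrow> (x \<in> A \<longleftrightarrow> y \<notin> A)"
  using assms by (cases "x \<in> A"; cases "y \<in> A") auto

lemma adjacent_in_component:
  assumes "{w, u} \<in> E" and "w \<noteq> u"
  shows "u \<in> component E w"
  using assms unfolding component_def adjacent_def by (simp add: r_into_rtranclp)

lemma neighbours_equal_degree_if_components_regular_or_biregular:
  assumes G: "simple_graph V E"
    and comps: "\<forall>C\<in>components V E. regular_on E C \<or> biregular_on E C"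
  shows "neighbours_equal_degree E"
  unfolding neighbours_equal_degree_def
proof (intro allI impI)
  fix w u v
  assume wu: "{w, u} \<in> E" and wv: "{w, v} \<in> E"
  have "w \<noteq> u" "w \<noteq> v" "w \<in> V"
    using simple_graph_doubleton_edge[OF G] wu wv by blast+
  define C where "C = component E w"
  have "C \<in> components V E"
    using \<open>w \<in> V\<close> unfolding C_def components_def by blast
  have "w \<in> C"
    by (simp add: C_def component_def)
  moreover have "u \<in> C" "v \<in> C"
    unfolding C_def using wu wv \<open>w \<noteq> u\<close> \<open>w \<noteq> v\<close> by (simp_all add: adjacent_in_component)
  ultimately have edges: "{w, u} \<in> comp_edges E C" "{w, v} \<in> comp_edges E C"
    using wu wv unfolding comp_edges_def by auto
  from comps \<open>C \<in> components V E\<close> consider "regular_on E C" | "biregular_on E C"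
    by blast
  then show "degree E u = degree E v"
  proof cases
    case 1
    then show ?thesis
      using \<open>u \<in> C\<close> \<open>v \<in> C\<close> unfolding regular_on_def by auto
  next
    case 2
    then obtain A B k l where AB: "A \<union> B = C" "A \<inter> B = {}"
      and crossing: "\<forall>e\<in>comp_edges E C. card (e \<inter> A) = 1"
      and "\<forall>x\<in>A. degree E x = k" "\<forall>x\<in>B. degree E x = l"
      unfolding biregular_on_def by blast
    moreover have "card ({w, u} \<inter> A) = 1" "card ({w, v} \<inter> A) = 1"
      using crossing edges by simp_all
    then have "u \<in> A \<longleftrightarrow> v \<in> A"
      using card_doubleton_Int_eq_1_iff[OF \<open>w \<noteq> u\<close>] card_doubleton_Int_eq_1_iff[OF \<open>w \<noteq> v\<close>]
      by simp
    ultimately show ?thesis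
      using \<open>u \<in> C\<close> \<open>v \<in> C\<close> by (cases "u \<in> A") auto
  qed
qed

lemma component_regular_or_biregular_if_neighbours_equal_degree:
  assumes G: "simple_graph V E" and N: "neighbours_equal_degree E"
    and "C \<in> components V E"
  shows "regular_on E C \<or> biregular_on E C"
proof -
  obtain x where C: "C = component E x"
    using \<open>C \<in> components V E\<close> unfolding components_def by blast
  have adjacent_edge: "{y, z} \<in> E" if "adjacent E y z" for y z
    using that unfolding adjacent_def by simp
  have same_degree: "degree E z = degree E z'" if "adjacent E y z" "adjacent E y z'" for y z z'
    using N[unfolded neighbours_equal_degree_def, rule_format, OF adjacent_edge adjacent_edge] that .
  \<comment> \<open>if \<open>x\<close> is isolated, any \<open>b\<close> will do and \<open>C = {x}\<close> turns out regular\<close>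
  obtain b where b: "\<forall>z. adjacent E x z \<longrightarrow> degree E z = b"
    using same_degree by blast
  define a where "a = degree E x"
  define alternates where
    "alternates p q y \<longleftrightarrow> degree E y = p \<and> (\<forall>z. adjacent E y z \<longrightarrow> degree E z = q)" for p q y
  have alternation: "alternates a b y \<or> alternates b a y" if "y \<in> C" for y
  proof -
    from that have "(adjacent E)\<^sup>*\<^sup>* x y"
      by (simp add: C component_def)
    then show ?thesis
    proof (induction rule: rtranclp_induct)
      case base
      show ?case
        using b unfolding alternates_def a_def by simp
    next
      case (step y z)
      have "adjacent E z y"
        using step.hyps(2) unfolding adjacent_def by (auto simp: insert_commute)
      then have "degree E z' = degree E y" if "adjacent E z z'" for z'
        using same_degree that by blast
      with step.IH step.hyps(2) show ?case
        unfolding alternates_def by auto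
    qed
  qed
  show ?thesis
  proof (cases "a = b")
    case True
    then have "regular_on E C"
      using alternation unfolding regular_on_def alternates_def by blast
    then show ?thesis ..
  next
    case False
    define A where "A = {y \<in> C. degree E y = a}"
    define B where "B = {y \<in> C. degree E y = b}"
    have "\<forall>e\<in>comp_edges E C. card (e \<inter> A) = 1 \<and> card (e \<inter> B) = 1"
    proof
      fix e
      assume e_comp: "e \<in> comp_edges E C"
      obtain u v where e: "e = {u, v}" "u \<noteq> v"
        using G e_comp unfolding comp_edges_def by (blast elim: simple_graph_edgeE)
      then have "u \<in> C" "v \<in> C" "adjacent E u v"
        using e_comp unfolding comp_edges_def adjacent_def by auto
      then have "degree E u = a \<and> degree E v = b \<or> degree E u = b \<and> degree E v = a"
        using alternation[of u] unfolding alternates_def by blast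
      then have "u \<in> A \<longleftrightarrow> v \<notin> A" "u \<in> B \<longleftrightarrow> v \<notin> B"
        using \<open>u \<in> C\<close> \<open>v \<in> C\<close> False unfolding A_def B_def by auto
      then show "card (e \<inter> A) = 1 \<and> card (e \<inter> B) = 1"
        using card_doubleton_Int_eq_1_iff[OF e(2)] e(1) by simp
    qed
    moreover have "A \<union> B = C" "A \<inter> B = {}"
      using alternation False unfolding A_def B_def alternates_def by auto
    moreover have "\<forall>y\<in>A. degree E y = a" "\<forall>y\<in>B. degree E y = b"
      by (simp_all add: A_def B_def)
    ultimately have "biregular_on E C"
      unfolding biregular_on_def by blast
    then show ?thesis ..
  qed
qed

lemma neighbours_equal_degree_iff_components_regular_or_biregular:
  assumes "simple_graph V E"
  shows "neighbours_equal_degree E \<longleftrightarrow>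
    (\<forall>C\<in>components V E. regular_on E C \<or> biregular_on E C)"
  using assms component_regular_or_biregular_if_neighbours_equal_degree
    neighbours_equal_degree_if_components_regular_or_biregular by blast

theorem corollary3p2:
  fixes V :: "'a set" and E :: "'a set set"
  assumes "simple_graph V E" and "nontrivial V E"
  shows "harmonic_index (line_graph_edges E) \<le> real (card E) / 2 \<and>
    (harmonic_index (line_graph_edges E) = real (card E) / 2 \<longleftrightarrow>
      (\<forall>C \<in> components V E. regular_on E C \<or> biregular_on E C))"
proof -
  have L: "simple_graph E (line_graph_edges E)"
    using assms(1) by (rule simple_graph_line_graph)
  have vertices: "\<Union>(line_graph_edges E) = E"
    using assms by (rule Union_line_graph_edges)
  have "harmonic_index (line_graph_edges E) = real (card E) / 2 \<longleftrightarrow> neighbours_equal_degree E"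
    using harmonic_index_eq_half_card_iff[OF L] line_graph_ends_equal_degree_iff[OF assms(1)]
    unfolding vertices by simp
  then show ?thesis
    using harmonic_index_le_half_card[OF L]
      neighbours_equal_degree_iff_components_regular_or_biregular[OF assms(1)]
    unfolding vertices by simp
qed

end
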